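(* Let $k\ge t+3$ and $n\ge (k-t)(k-t+1)+t$, and let $\mathcal F\subseteq\binom{[n]}{k}$ be a $t$-intersecting family; write $\tau=\tau_t(\mathcal F)$. Then $$|\mathcal F|\le (k-t+1)^{\tau-t}\binom{\tau}{t}\binom{n-\tau}{k-\tau}.$$ Moreover, if $\mathcal B\subseteq\mathcal F$ is such that no member of $\mathcal B$ contains any member of $\mathcal T_t(\mathcal F)$, then $$|\mathcal B|\le (k-t+1)^{\tau-t+1}\binom{\tau}{t}\binom{n-\tau-1}{k-\tau-1},$$ with the convention $\binom{m}{-1}=0$.
   Context: A family is $t$-intersecting if any two members meet in at least $t$ elements. A $t$-cover of $\mathcal F$ is a set $S\subseteq[n]$ with $|S\cap F|\ge t$ for all $F\in\mathcal F$; $\tau_t(\mathcal F)$ is the minimum size of a $t$-cover, and $\mathcal T_t(\mathcal F)$ is the set of all $t$-covers of $\mathcal F$ of size $\tau_t(\mathcal F)$. *)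

theory Defs
  imports Main
begin

definition t_intersecting :: "nat \<Rightarrow> nat set set \<Rightarrow> bool" where
  "t_intersecting t F \<longleftrightarrow> (\<forall>A\<in>F. \<forall>B\<in>F. t \<le> card (A \<inter> B))"

definition t_cover :: "nat \<Rightarrow> nat \<Rightarrow> nat set set \<Rightarrow> nat set \<Rightarrow> bool" where
  "t_cover n t F S \<longleftrightarrow> S \<subseteq> {1..n} \<and> (\<forall>A\<in>F. t \<le> card (S \<inter> A))"

definition tau_t :: "nat \<Rightarrow> nat \<Rightarrow> nat set set \<Rightarrow> nat" where
  "tau_t n t F = (LEAST m. \<exists>S. t_cover n t F S \<and> card S = m)"

definition T_t :: "nat \<Rightarrow> nat \<Rightarrow> nat set set \<Rightarrow> nat set set" where
  "T_t n t F = {S. t_cover n t F S \<and> card S = tau_t n t F}"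

definition binom :: "nat \<Rightarrow> int \<Rightarrow> nat" where
  "binom m j = (if j < 0 then 0 else m choose (nat j))"

end

(* Write c = k - t + 1 and F(S) for the members of F containing S. If S is not a t-cover,
   some A in F meets S in j < t points, and every member containing S meets A - S in at least
   t - j further points. So F(S) is covered by the families F(S \<union> D), D ranging over the
   (t - j)-subsets of A - S, of which there are C(k - j, t - j) <= c^(t - j). Iterate as long
   as |S| < m, where no member contains a t-cover of size < m; once |S| >= m, count supersets:
   |F(S)| <= C(n - |S|, k - |S|) <= c^(m - |S|) C(n - m, k - m), each step of this chain being
   where n >= (k - t)(k - t + 1) + t is used. Hence c^|S| |F(S)| <= c^m C(n - m, k - m).
   Summing over the t-subsets of a minimal t-cover gives the first bound with m = tau, and the
   second with m = tau + 1, since no member of B contains a t-cover of size tau. *)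

theory Submission
  imports Defs
begin

lemma binomial_add_le_Suc_power: "(a + d) choose d \<le> (a + 1 :: nat) ^ d"
proof (induction d)
  case 0
  show ?case by simp
next
  case (Suc d)
  have "(a + Suc d choose Suc d) * Suc d = Suc (a + d) * (a + d choose d)"
    using Suc_times_binomial_eq[of "a + d" d] by simp
  also have "\<dots> \<le> Suc (a + d) * (a + 1) ^ d"
    using Suc.IH by (rule mult_le_mono2)
  also have "\<dots> \<le> (a + 1) ^ Suc d * Suc d"
    by (simp add: algebra_simps)
  finally show ?case
    by (metis mult_le_cancel2 zero_less_Suc)
qed

lemma choose_mult_le_Suc_choose:
  fixes n k s c :: nat
  assumes "s < k" and "c * (k - s) \<le> n - s"
  shows "(n - Suc s choose (k - Suc s)) * c \<le> (n - s) choose (k - s)"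
proof (cases "c = 0")
  case False
  define N K where "N = n - Suc s" and "K = k - Suc s"
  have "1 \<le> c * (k - s)"
    using assms(1) False by simp
  then have diffs: "k - s = Suc K" "n - s = Suc N"
    using assms unfolding N_def K_def by linarith+
  have "c * Suc K \<le> Suc N"
    using assms(2) by (simp only: diffs)
  then have "(N choose K) * c * Suc K \<le> (N choose K) * Suc N"
    unfolding mult.assoc by (rule mult_le_mono2)
  also have "\<dots> = (Suc N choose Suc K) * Suc K"
    using Suc_times_binomial_eq[of N K] by (simp add: mult.commute)
  finally have "(N choose K) * c \<le> Suc N choose Suc K"
    by (metis mult_le_cancel2 zero_less_Suc)
  then show ?thesis
    unfolding diffs by (simp only: N_def K_def)
qed simp

lemma choose_mult_power_le_choose:
  fixes n k m d c :: nat
  assumes "m + d \<le> k" and "\<And>s. m \<le> s \<Longrightarrow> s < k \<Longrightarrow> c * (k - s) \<le> n - s"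
  shows "(n - (m + d) choose (k - (m + d))) * c ^ d \<le> (n - m) choose (k - m)"
  using assms(1)
proof (induction d)
  case 0
  show ?case by simp
next
  case (Suc d)
  have "(n - (m + Suc d) choose (k - (m + Suc d))) * c ^ Suc d
      = ((n - Suc (m + d) choose (k - Suc (m + d))) * c) * c ^ d"
    by (simp add: mult.assoc)
  also have "\<dots> \<le> (n - (m + d) choose (k - (m + d))) * c ^ d"
    using Suc.prems by (intro mult_le_mono1 choose_mult_le_Suc_choose assms(2)) auto
  also have "\<dots> \<le> (n - m) choose (k - m)"
    using Suc by simp
  finally show ?case .
qed

lemma large_ground_mult_le:
  fixes n k t s :: nat
  assumes "n \<ge> (k - t) * (k - t + 1) + t" and "t \<le> s" and "s < k"
  shows "(k - t + 1) * (k - s) \<le> n - s"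
proof -
  obtain b e where s: "s = t + b" and k: "k = t + b + Suc e"
    using assms(2,3) by (metis add_Suc_right le_Suc_ex less_imp_Suc_add)
  have "(b + Suc e + 1) * Suc e + b \<le> (b + Suc e) * (b + Suc e + 1)"
    by (simp add: algebra_simps)
  then show ?thesis
    using assms(1) by (simp add: s k algebra_simps)
qed

lemma card_supersets_le_choose:
  assumes "finite U" and "S \<subseteq> U"
  shows "card {X. X \<subseteq> U \<and> card X = k \<and> S \<subseteq> X} \<le> (card U - card S) choose (k - card S)"
proof -
  have "finite S"
    using assms finite_subset by blast
  have "{X. X \<subseteq> U \<and> card X = k \<and> S \<subseteq> X}
      \<subseteq> (\<lambda>Y. Y \<union> S) ` {Y. Y \<subseteq> U - S \<and> card Y = k - card S}"
  proof
    fix X assume "X \<in> {X. X \<subseteq> U \<and> card X = k \<and> S \<subseteq> X}"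
    then have "X = (X - S) \<union> S" "X - S \<subseteq> U - S" "card (X - S) = k - card S"
      using card_Diff_subset[OF \<open>finite S\<close>] by auto
    then show "X \<in> (\<lambda>Y. Y \<union> S) ` {Y. Y \<subseteq> U - S \<and> card Y = k - card S}"
      by blast
  qed
  then have "card {X. X \<subseteq> U \<and> card X = k \<and> S \<subseteq> X}
      \<le> card ((\<lambda>Y. Y \<union> S) ` {Y. Y \<subseteq> U - S \<and> card Y = k - card S})"
    using assms(1) by (intro card_mono) auto
  also have "\<dots> \<le> card {Y. Y \<subseteq> U - S \<and> card Y = k - card S}"
    using assms(1) by (intro card_image_le) auto
  also have "\<dots> = (card U - card S) choose (k - card S)"
    using assms by (simp add: n_subsets card_Diff_subset \<open>finite S\<close>)
  finally show ?thesis .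
qed

lemma card_mult_le_choose_mult:
  fixes G :: "'a set set"
  assumes "finite A" and "\<And>X. X \<in> G \<Longrightarrow> r \<le> card (X \<inter> A)"
    and "\<And>D. D \<subseteq> A \<Longrightarrow> card D = r \<Longrightarrow> card {X \<in> G. D \<subseteq> X} * w \<le> M"
  shows "card G * w \<le> (card A choose r) * M"
proof (cases "finite G")
  case True
  define Ds where "Ds = {D. D \<subseteq> A \<and> card D = r}"
  have "finite Ds"
    unfolding Ds_def using assms(1) by simp
  have "G \<subseteq> (\<Union>D\<in>Ds. {X \<in> G. D \<subseteq> X})"
  proof
    fix X assume "X \<in> G"
    moreover obtain D where "D \<subseteq> X \<inter> A" "card D = r"
      using assms(2)[OF \<open>X \<in> G\<close>] by (rule obtain_subset_with_card_n)
    ultimately show "X \<in> (\<Union>D\<in>Ds. {X \<in> G. D \<subseteq> X})"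
      unfolding Ds_def by blast
  qed
  then have "card G \<le> card (\<Union>D\<in>Ds. {X \<in> G. D \<subseteq> X})"
    using True \<open>finite Ds\<close> by (intro card_mono) auto
  also have "\<dots> \<le> (\<Sum>D\<in>Ds. card {X \<in> G. D \<subseteq> X})"
    by (rule card_UN_le[OF \<open>finite Ds\<close>])
  finally have "card G * w \<le> (\<Sum>D\<in>Ds. card {X \<in> G. D \<subseteq> X}) * w"
    by simp
  also have "\<dots> = (\<Sum>D\<in>Ds. card {X \<in> G. D \<subseteq> X} * w)"
    by (rule sum_distrib_right)
  also have "\<dots> \<le> (\<Sum>D\<in>Ds. M)"
    by (rule sum_mono) (use assms(3) in \<open>auto simp: Ds_def\<close>)
  also have "\<dots> = (card A choose r) * M"
    using assms(1) by (simp add: Ds_def n_subsets)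
  finally show ?thesis .
qed simp

lemma card_supersets_mult_power_le:
  fixes G :: "nat set set"
  assumes ground: "n \<ge> (k - t) * (k - t + 1) + t"
    and members: "\<forall>X\<in>G. X \<subseteq> {1..n} \<and> card X = k"
    and "t \<le> m" and "m \<le> card S"
  shows "card {X \<in> G. S \<subseteq> X} * (k - t + 1) ^ (card S - m) \<le> (n - m) choose (k - m)"
proof (cases "S \<subseteq> {1..n} \<and> card S \<le> k")
  case False
  have "S \<subseteq> {1..n} \<and> card S \<le> k" if "X \<in> G" and "S \<subseteq> X" for X
    using members that card_mono[of X S] finite_subset[of X "{1..n}"] by auto
  then have "{X \<in> G. S \<subseteq> X} = {}"
    using False by blast
  then show ?thesis
    by (metis card.empty le0 mult_0)
next
  case True
  have "card {X \<in> G. S \<subseteq> X} \<le> card {X. X \<subseteq> {1..n} \<and> card X = k \<and> S \<subseteq> X}"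
    using members by (intro card_mono) auto
  also have "\<dots> \<le> (n - card S) choose (k - card S)"
    using card_supersets_le_choose[of "{1..n}" S k] True by simp
  finally have "card {X \<in> G. S \<subseteq> X} * (k - t + 1) ^ (card S - m)
      \<le> (n - (m + (card S - m)) choose (k - (m + (card S - m)))) * (k - t + 1) ^ (card S - m)"
    using \<open>m \<le> card S\<close> by simp
  also have "\<dots> \<le> (n - m) choose (k - m)"
    using True \<open>m \<le> card S\<close> \<open>t \<le> m\<close>
    by (intro choose_mult_power_le_choose large_ground_mult_le[OF ground]) auto
  finally show ?thesis .
qed

lemma tau_t_le_card: "t_cover n t F S \<Longrightarrow> tau_t n t F \<le> card S"
  unfolding tau_t_def by (rule Least_le) blast

lemma tau_t_attained:
  assumes "t_cover n t F S"
  obtains T where "t_cover n t F T" and "card T = tau_t n t F"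
  using LeastI_ex[of "\<lambda>m. \<exists>S. t_cover n t F S \<and> card S = m"] assms
  unfolding tau_t_def by blast

lemma t_le_card_t_cover:
  assumes "t_cover n t F T" and "A \<in> F"
  shows "t \<le> card T"
proof -
  have "finite T"
    using assms(1) unfolding t_cover_def by (meson finite_atLeastAtMost finite_subset)
  have "t \<le> card (T \<inter> A)"
    using assms unfolding t_cover_def by blast
  also have "\<dots> \<le> card T"
    using \<open>finite T\<close> by (intro card_mono) auto
  finally show ?thesis .
qed

locale t_intersecting_family =
  fixes n k t :: nat and F :: "nat set set"
  assumes members: "\<forall>A\<in>F. A \<subseteq> {1..n} \<and> card A = k"
    and intersecting: "t_intersecting t F"
begin

lemma member_t_cover: "A \<in> F \<Longrightarrow> t_cover n t F A"
  using members intersecting unfolding t_cover_def t_intersecting_def by (metis Int_commute)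

lemma t_le_k: "A \<in> F \<Longrightarrow> t \<le> k"
  using members intersecting unfolding t_intersecting_def by force

lemma card_Int_Diff_ge:
  assumes "X \<in> F" and "A \<in> F"
  shows "t - card (S \<inter> A) \<le> card (X \<inter> (A - S))"
proof -
  have "finite A"
    using members \<open>A \<in> F\<close> by (auto intro: finite_subset)
  have "t \<le> card (X \<inter> A)"
    using intersecting assms unfolding t_intersecting_def by blast
  also have "\<dots> \<le> card ((S \<inter> A) \<union> (X \<inter> (A - S)))"
    using \<open>finite A\<close> by (intro card_mono) auto
  also have "\<dots> \<le> card (S \<inter> A) + card (X \<inter> (A - S))"
    by (rule card_Un_le)
  finally show ?thesis
    by linarith
qed

lemma card_supersets_branch:
  assumes "G \<subseteq> F" and "finite S" and "A \<in> F" and "card (S \<inter> A) < t"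
    and larger: "\<And>S'. S \<subset> S' \<Longrightarrow> finite S' \<Longrightarrow> card {X \<in> G. S' \<subseteq> X} * (k - t + 1) ^ card S' \<le> M"
  shows "card {X \<in> G. S \<subseteq> X} * (k - t + 1) ^ card S \<le> M"
proof -
  let ?c = "k - t + 1"
  define r where "r = t - card (S \<inter> A)"
  have "finite A" and "card A = k"
    using members \<open>A \<in> F\<close> by (auto intro: finite_subset)
  have "card (A - S) = (k - t) + r"
    using card_Diff_subset_Int[of A S] \<open>finite A\<close> \<open>card A = k\<close> t_le_k[OF \<open>A \<in> F\<close>] assms(4)
    by (simp add: r_def Int_commute)
  have "card {X \<in> G. S \<subseteq> X} * ?c ^ (card S + r) \<le> (card (A - S) choose r) * M"
  proof (rule card_mult_le_choose_mult)
    show "finite (A - S)"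
      using \<open>finite A\<close> by simp
    show "r \<le> card (X \<inter> (A - S))" if "X \<in> {X \<in> G. S \<subseteq> X}" for X
      using card_Int_Diff_ge[of X A S] that \<open>G \<subseteq> F\<close> \<open>A \<in> F\<close> unfolding r_def by blast
  next
    fix D assume D: "D \<subseteq> A - S" "card D = r"
    then have "finite D" and "D \<noteq> {}"
      using \<open>finite A\<close> finite_subset assms(4) unfolding r_def by auto
    moreover have "S \<inter> D = {}"
      using D by blast
    ultimately have "S \<subset> S \<union> D" and "card (S \<union> D) = card S + r"
      using D \<open>finite S\<close> by (auto simp: card_Un_disjoint)
    moreover have "{X \<in> {X \<in> G. S \<subseteq> X}. D \<subseteq> X} = {X \<in> G. S \<union> D \<subseteq> X}"
      by auto
    ultimately show "card {X \<in> {X \<in> G. S \<subseteq> X}. D \<subseteq> X} * ?c ^ (card S + r) \<le> M"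
      using larger[of "S \<union> D"] \<open>finite S\<close> \<open>finite D\<close> by simp
  qed
  also have "\<dots> \<le> ?c ^ r * M"
    using binomial_add_le_Suc_power[of "k - t" r] \<open>card (A - S) = (k - t) + r\<close> by simp
  finally have "card {X \<in> G. S \<subseteq> X} * ?c ^ card S * ?c ^ r \<le> M * ?c ^ r"
    by (simp add: power_add ac_simps)
  then show ?thesis
    by simp
qed

lemma card_supersets_le:
  assumes ground: "n \<ge> (k - t) * (k - t + 1) + t" and "G \<subseteq> F" and "t \<le> m"
    and no_small_cover: "\<And>S X. t_cover n t F S \<Longrightarrow> card S < m \<Longrightarrow> X \<in> G \<Longrightarrow> \<not> S \<subseteq> X"
    and "finite S"
  shows "card {X \<in> G. S \<subseteq> X} * (k - t + 1) ^ card S \<le> (k - t + 1) ^ m * ((n - m) choose (k - m))"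
  using \<open>finite S\<close>
proof (induction "m - card S" arbitrary: S rule: less_induct)
  case (less S)
  consider "m \<le> card S" | "{X \<in> G. S \<subseteq> X} = {}"
    | A where "A \<in> F" and "card (S \<inter> A) < t" and "card S < m"
  proof (cases "m \<le> card S \<or> {X \<in> G. S \<subseteq> X} = {}")
    case False
    then obtain X where "X \<in> G" "S \<subseteq> X" "card S < m"
      by auto
    then have "\<not> t_cover n t F S" and "S \<subseteq> {1..n}"
      using no_small_cover members \<open>G \<subseteq> F\<close> by blast+
    then show thesis
      using that(3) \<open>card S < m\<close> unfolding t_cover_def by (meson not_le)
  qed (use that in blast)
  then show ?case
  proof cases
    case 1
    have "card {X \<in> G. S \<subseteq> X} * (k - t + 1) ^ (card S - m) \<le> (n - m) choose (k - m)"
      using card_supersets_mult_power_le[OF ground _ \<open>t \<le> m\<close> 1] members \<open>G \<subseteq> F\<close> by blast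
    then have "card {X \<in> G. S \<subseteq> X} * (k - t + 1) ^ (card S - m) * (k - t + 1) ^ m
        \<le> (k - t + 1) ^ m * ((n - m) choose (k - m))"
      by (simp add: mult.commute)
    then show ?thesis
      using 1 by (simp add: mult.assoc power_add[symmetric])
  next
    case 2
    then show ?thesis
      by (metis card.empty le0 mult_0)
  next
    case (3 A)
    show ?thesis
    proof (rule card_supersets_branch[OF \<open>G \<subseteq> F\<close> less.prems 3(1,2)])
      fix S' assume "S \<subset> S'" and "finite S'"
      then have "m - card S' < m - card S"
        using psubset_card_mono[of S' S] 3(3) by linarith
      then show "card {X \<in> G. S' \<subseteq> X} * (k - t + 1) ^ card S'
          \<le> (k - t + 1) ^ m * ((n - m) choose (k - m))"
        using less.hyps \<open>finite S'\<close> by blast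
    qed
  qed
qed

lemma card_le_by_t_cover:
  assumes ground: "n \<ge> (k - t) * (k - t + 1) + t" and "G \<subseteq> F" and "t \<le> m"
    and no_small_cover: "\<And>S X. t_cover n t F S \<Longrightarrow> card S < m \<Longrightarrow> X \<in> G \<Longrightarrow> \<not> S \<subseteq> X"
    and "t_cover n t F T"
  shows "card G \<le> (k - t + 1) ^ (m - t) * (card T choose t) * ((n - m) choose (k - m))"
proof -
  let ?c = "k - t + 1"
  have "finite T"
    using \<open>t_cover n t F T\<close> unfolding t_cover_def by (meson finite_atLeastAtMost finite_subset)
  have "card G * ?c ^ t \<le> (card T choose t) * (?c ^ m * ((n - m) choose (k - m)))"
  proof (rule card_mult_le_choose_mult[OF \<open>finite T\<close>])
    show "t \<le> card (X \<inter> T)" if "X \<in> G" for X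
      using \<open>t_cover n t F T\<close> \<open>G \<subseteq> F\<close> that unfolding t_cover_def by (auto simp: Int_commute)
    show "card {X \<in> G. D \<subseteq> X} * ?c ^ t \<le> ?c ^ m * ((n - m) choose (k - m))"
      if "D \<subseteq> T" and "card D = t" for D
      using card_supersets_le[OF ground \<open>G \<subseteq> F\<close> \<open>t \<le> m\<close> no_small_cover, of D] that
        \<open>finite T\<close> finite_subset by blast
  qed
  also have "\<dots> = (?c ^ (m - t) * (card T choose t) * ((n - m) choose (k - m))) * ?c ^ t"
    using \<open>t \<le> m\<close> by (simp add: power_add[symmetric] ac_simps)
  finally show ?thesis by simp
qed

lemma minimal_t_cover_exists:
  assumes "F \<noteq> {}"
  obtains T where "t_cover n t F T" and "card T = tau_t n t F" and "t \<le> card T"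
proof -
  obtain A where "A \<in> F"
    using assms by blast
  then obtain T where "t_cover n t F T" and "card T = tau_t n t F"
    using tau_t_attained member_t_cover by blast
  then show thesis
    using that t_le_card_t_cover \<open>A \<in> F\<close> by blast
qed

lemma card_le_tau_t_bound:
  assumes ground: "n \<ge> (k - t) * (k - t + 1) + t" and "F \<noteq> {}"
  shows "card F \<le> (k - t + 1) ^ (tau_t n t F - t) * (tau_t n t F choose t)
                   * ((n - tau_t n t F) choose (k - tau_t n t F))"
proof -
  obtain T where T: "t_cover n t F T" "card T = tau_t n t F" "t \<le> card T"
    using minimal_t_cover_exists[OF \<open>F \<noteq> {}\<close>] by blast
  have "\<not> S \<subseteq> X" if "t_cover n t F S" and "card S < tau_t n t F" for S X
    using tau_t_le_card[OF that(1)] that(2) by simp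
  then show ?thesis
    using card_le_by_t_cover[OF ground order_refl _ _ T(1)] T(2,3) by simp
qed

lemma card_avoiding_minimal_t_covers_le:
  assumes ground: "n \<ge> (k - t) * (k - t + 1) + t" and "F \<noteq> {}" and "B \<subseteq> F"
    and avoids: "\<forall>X\<in>B. \<forall>T\<in>T_t n t F. \<not> T \<subseteq> X"
  shows "card B \<le> (k - t + 1) ^ (tau_t n t F - t + 1) * (tau_t n t F choose t)
                   * binom (n - tau_t n t F - 1) (int k - int (tau_t n t F) - 1)"
proof (cases "tau_t n t F < k")
  case True
  obtain T where T: "t_cover n t F T" "card T = tau_t n t F" "t \<le> card T"
    using minimal_t_cover_exists[OF \<open>F \<noteq> {}\<close>] by blast
  have "\<not> S \<subseteq> X" if "t_cover n t F S" and "card S < tau_t n t F + 1" and "X \<in> B" for S X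
  proof -
    have "S \<in> T_t n t F"
      using tau_t_le_card[OF that(1)] that(1,2) unfolding T_t_def by simp
    then show ?thesis
      using avoids that(3) by blast
  qed
  then have "card B \<le> (k - t + 1) ^ (tau_t n t F + 1 - t) * (tau_t n t F choose t)
      * ((n - (tau_t n t F + 1)) choose (k - (tau_t n t F + 1)))"
    using card_le_by_t_cover[OF ground \<open>B \<subseteq> F\<close> _ _ T(1)] T(2,3) by simp
  then show ?thesis
    using True T(2,3) by (simp add: binom_def nat_diff_distrib Suc_diff_le)
next
  case False
  have "X \<in> T_t n t F" if "X \<in> B" for X
  proof -
    have "t_cover n t F X" and "card X = k"
      using that \<open>B \<subseteq> F\<close> member_t_cover members by auto
    then show ?thesis
      using tau_t_le_card[of n t F X] False unfolding T_t_def by simp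
  qed
  then have "B = {}"
    using avoids by blast
  then show ?thesis by simp
qed

end


theorem lemma3p2:
  fixes n k t :: nat and F :: "nat set set"
  assumes "k \<ge> t + 3"
    and "n \<ge> (k - t) * (k - t + 1) + t"
    and "\<forall>A\<in>F. A \<subseteq> {1..n} \<and> card A = k"
    and "t_intersecting t F"
  shows "card F \<le> (k - t + 1) ^ (tau_t n t F - t) * (tau_t n t F choose t)
                   * ((n - tau_t n t F) choose (k - tau_t n t F))
         \<and> (\<forall>B. B \<subseteq> F \<longrightarrow> (\<forall>X\<in>B. \<forall>T\<in>T_t n t F. \<not> T \<subseteq> X) \<longrightarrow>
           card B \<le> (k - t + 1) ^ (tau_t n t F - t + 1) * (tau_t n t F choose t)
                   * binom (n - tau_t n t F - 1) (int k - int (tau_t n t F) - 1))"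
proof (cases "F = {}")
  case False
  interpret t_intersecting_family n k t F
    using assms(3,4) by unfold_locales
  show ?thesis
    using card_le_tau_t_bound[OF assms(2) False]
      card_avoiding_minimal_t_covers_le[OF assms(2) False] by blast
qed simp

end
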